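(* Let $-\frac1n<\alpha<0$ and $f=(1-\alpha\varphi)^{1/\alpha}\in\mathcal{C}^+_\alpha(\mathbb{R}^n)$. Then $$\delta J_\alpha(f,f)=n\,J(f)-\int_{\mathbb{R}^n}\varphi(x)\,f(x)^{1-\alpha}\,dx,$$ and $\delta J_\alpha(f,f)\in(-\infty,+\infty)$.
   Context: $\mathrm{Conv}(\mathbb{R}^n)$ is the set of proper, convex, lower semi-continuous $\varphi:\mathbb{R}^n\to\mathbb{R}\cup\{+\infty\}$; $\varphi$ is coercive if $\liminf_{|x|\to\infty}\varphi(x)/|x|>0$. For $\alpha<0$, $\mathcal{C}^+_\alpha(\mathbb{R}^n)$ is the set of $f=(1-\alpha\varphi)^{1/\alpha}$ with $\varphi\in\mathrm{Conv}(\mathbb{R}^n)$ nonnegative and coercive (convention: $f=0$ where $\varphi=+\infty$). The Legendre transform is $\varphi^*(y)=\sup_x\{\langle x,y\rangle-\varphi(x)\}$. For $\alpha$-concave $f=(1-\alpha\varphi)^{1/\alpha}$, $g=(1-\alpha\psi)^{1/\alpha}$ and $t>0$, $f\oplus_\alpha t\cdot_\alpha g:=\big(1-\alpha(\varphi^*+t\psi^* )^*\big)^{1/\alpha}$. $J(f)=\int_{\mathbb{R}^n}f\,dx$, and $\delta J_\alpha(f,g):=\lim_{t\to0^+}\frac{J(f\oplus_\alpha t\cdot_\alpha g)-J(f)}{t}$ whenever the limit exists and is finite. *)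

theory Defs
  imports "HOL-Analysis.Analysis"
begin

text \<open>Functions \<open>\<phi> : \<real>^n \<rightarrow> \<real> \<union> {+\<infinity>}\<close> are modelled as ereal-valued functions.\<close>

definition proper_fun :: "('a \<Rightarrow> ereal) \<Rightarrow> bool" where
  "proper_fun \<phi> \<longleftrightarrow> (\<exists>x. \<phi> x \<noteq> \<infinity>) \<and> (\<forall>x. \<phi> x \<noteq> -\<infinity>)"

text \<open>Convexity and lower semicontinuity via the epigraph.\<close>
definition epigraph :: "('a \<Rightarrow> ereal) \<Rightarrow> ('a \<times> real) set" where
  "epigraph \<phi> = {(x, t). \<phi> x \<le> ereal t}"

definition Conv :: "('a::euclidean_space \<Rightarrow> ereal) set" where
  "Conv = {\<phi>. proper_fun \<phi> \<and> convex (epigraph \<phi>) \<and> closed (epigraph \<phi>)}"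

definition coercive :: "('a::real_normed_vector \<Rightarrow> ereal) \<Rightarrow> bool" where
  "coercive \<phi> \<longleftrightarrow> Liminf at_infinity (\<lambda>x. \<phi> x / ereal (norm x)) > 0"

definition legendre :: "('a::real_inner \<Rightarrow> ereal) \<Rightarrow> 'a \<Rightarrow> ereal" where
  "legendre \<phi> y = (SUP x. ereal (inner x y) - \<phi> x)"

definition alpha_fn :: "real \<Rightarrow> ('a \<Rightarrow> ereal) \<Rightarrow> 'a \<Rightarrow> real" where
  "alpha_fn \<alpha> \<phi> x = (case \<phi> x of ereal r \<Rightarrow> (1 - \<alpha> * r) powr (1 / \<alpha>) | _ \<Rightarrow> 0)"

definition C_alpha_plus :: "real \<Rightarrow> ('a::euclidean_space \<Rightarrow> real) set" where
  "C_alpha_plus \<alpha> = {alpha_fn \<alpha> \<phi> | \<phi>. \<phi> \<in> Conv \<and> (\<forall>x. \<phi> x \<ge> 0) \<and> coercive \<phi>}"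

text \<open>\<open>f \<oplus>_\<alpha> t \<cdot>_\<alpha> g\<close> for \<open>f = (1-\<alpha>\<phi>)^{1/\<alpha>}\<close>, \<open>g = (1-\<alpha>\<psi>)^{1/\<alpha>}\<close>.\<close>
definition alpha_sum :: "real \<Rightarrow> ('a::real_inner \<Rightarrow> ereal) \<Rightarrow> real \<Rightarrow> ('a \<Rightarrow> ereal) \<Rightarrow> 'a \<Rightarrow> real" where
  "alpha_sum \<alpha> \<phi> t \<psi> = alpha_fn \<alpha> (legendre (\<lambda>y. legendre \<phi> y + ereal t * legendre \<psi> y))"

definition J :: "('a::euclidean_space \<Rightarrow> real) \<Rightarrow> real" where
  "J f = integral\<^sup>L lborel f"

end

theory Submission
  imports Defs
begin

text \<open>
  By the Fenchel--Moreau theorem the Legendre transform is an involution on \<open>Conv\<close>, so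
  \<open>\<phi>\<^sup>* + t \<phi>\<^sup>* = (1 + t) \<phi>\<^sup>*\<close> is the transform of \<open>x \<mapsto> (1 + t) \<phi> (x / (1 + t))\<close>.
  Hence, writing \<open>f\<^sub>s = (1 - \<alpha> s \<phi>)\<^bsup>1/\<alpha>\<^esup>\<close>, the function \<open>f \<oplus>\<^sub>\<alpha> t \<cdot>\<^sub>\<alpha> f\<close> is the dilation
  of \<open>f\<^sub>s\<close> by \<open>s = 1 + t\<close>, and \<open>J (f \<oplus>\<^sub>\<alpha> t \<cdot>\<^sub>\<alpha> f) = s\<^sup>n J (f\<^sub>s)\<close>.
  Differentiating this product at \<open>t = 0\<close> gives \<open>n J f\<close> plus the right derivative of
  \<open>s \<mapsto> J (f\<^sub>s)\<close> at \<open>s = 1\<close>, which is \<open>-\<integral> \<phi> f\<^bsup>1-\<alpha>\<^esup>\<close> by dominated convergence: by the mean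
  value theorem the difference quotients of \<open>s \<mapsto> (1 - \<alpha> s r)\<^bsup>1/\<alpha>\<^esup>\<close> for \<open>s > 1\<close> are bounded
  by \<open>r (1 - \<alpha> r)\<^bsup>1/\<alpha>-1\<^esup> \<le> -(1 - \<alpha> r)\<^bsup>1/\<alpha>\<^esup> / \<alpha>\<close>, i.e. by \<open>-f / \<alpha>\<close>. Finally \<open>f\<close> is
  integrable because coercivity makes \<open>1 - \<alpha> \<phi>\<close> grow linearly, so \<open>f = O((1 + |x|)\<^bsup>1/\<alpha>\<^esup>)\<close>
  with \<open>1/\<alpha> < -n\<close>.
\<close>

section \<open>Biconjugation on \<open>Conv\<close>\<close>

lemma Conv_not_MInf: "\<phi> \<in> Conv \<Longrightarrow> \<phi> x \<noteq> -\<infinity>"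
  by (simp add: Conv_def proper_fun_def)

lemma Conv_finite_point:
  assumes "\<phi> \<in> Conv"
  obtains x r where "\<phi> x = ereal r"
proof -
  obtain x where "\<phi> x \<noteq> \<infinity>" using assms by (auto simp: Conv_def proper_fun_def)
  with Conv_not_MInf[OF assms, of x] show thesis by (cases "\<phi> x") (auto intro: that)
qed

lemma fenchel_young: "ereal (inner x y) - \<phi> x \<le> legendre \<phi> y"
  unfolding legendre_def by (rule SUP_upper) auto

lemma Conv_epigraph_separation:
  fixes \<phi> :: "'a::euclidean_space \<Rightarrow> ereal"
  assumes "\<phi> \<in> Conv" "ereal a < \<phi> x0"
  obtains s u b where "0 \<le> s" "inner u x0 + s * a < b"
    "\<forall>x r. \<phi> x \<le> ereal r \<longrightarrow> b < inner u x + s * r"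
proof -
  have "(x0, a) \<notin> epigraph \<phi>" using assms(2) by (auto simp: epigraph_def)
  moreover have "convex (epigraph \<phi>)" "closed (epigraph \<phi>)" using assms(1) by (auto simp: Conv_def)
  ultimately obtain w b where w: "inner w (x0, a) < b" "\<forall>p\<in>epigraph \<phi>. b < inner w p"
    using separating_hyperplane_closed_point by blast
  obtain u s where ws: "w = (u, s)" by (cases w)
  have sep: "b < inner u x + s * r" if "\<phi> x \<le> ereal r" for x r
    using w(2) that by (auto simp: ws epigraph_def)
  obtain x1 r1 where x1: "\<phi> x1 = ereal r1" using Conv_finite_point[OF assms(1)] .
  \<comment> \<open>the epigraph contains the vertical ray above \<open>(x1, r1)\<close>\<close>
  have "0 \<le> s"
  proof (rule ccontr)
    assume "\<not> 0 \<le> s"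
    define r where "r = max r1 ((b - inner u x1) / s)"
    have "b < inner u x1 + s * r" using x1 by (intro sep) (simp add: r_def)
    moreover have "s * r \<le> s * ((b - inner u x1) / s)"
      using \<open>\<not> 0 \<le> s\<close> by (intro mult_left_mono_neg) (auto simp: r_def)
    ultimately show False using \<open>\<not> 0 \<le> s\<close> by simp
  qed
  moreover have "inner u x0 + s * a < b" using w(1) by (simp add: ws)
  ultimately show thesis using sep that by blast
qed

lemma nonvertical_separation_affine_minorant:
  fixes \<phi> :: "'a::real_inner \<Rightarrow> ereal"
  assumes "\<And>x. \<phi> x \<noteq> -\<infinity>" "0 < s" "inner u x0 + s * a < b"
    and "\<forall>x r. \<phi> x \<le> ereal r \<longrightarrow> b < inner u x + s * r"
  shows "\<forall>x. ereal (inner x (- u /\<^sub>R s) + b / s) \<le> \<phi> x"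
    and "a < inner x0 (- u /\<^sub>R s) + b / s"
proof -
  have eq: "inner x (- u /\<^sub>R s) + b / s = (b - inner u x) / s" for x
    using assms(2) by (simp add: inner_commute field_simps)
  show "\<forall>x. ereal (inner x (- u /\<^sub>R s) + b / s) \<le> \<phi> x"
  proof
    fix x
    show "ereal (inner x (- u /\<^sub>R s) + b / s) \<le> \<phi> x"
    proof (cases "\<phi> x")
      case (real r)
      then have "b < inner u x + s * r" using assms(4) by simp
      then show ?thesis using real assms(2) by (simp add: eq field_simps inner_commute)
    qed (use assms(1) in auto)
  qed
  show "a < inner x0 (- u /\<^sub>R s) + b / s"
    using assms(2,3) by (simp add: eq field_simps inner_commute)
qed

lemma Conv_has_affine_minorant:
  fixes \<phi> :: "'a::euclidean_space \<Rightarrow> ereal"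
  assumes "\<phi> \<in> Conv"
  obtains y c where "\<And>x. ereal (inner x y + c) \<le> \<phi> x"
proof -
  obtain x1 r1 where x1: "\<phi> x1 = ereal r1" using Conv_finite_point[OF assms] .
  then have "ereal (r1 - 1) < \<phi> x1" by simp
  then obtain s u b where usb: "0 \<le> s" "inner u x1 + s * (r1 - 1) < b"
    "\<forall>x r. \<phi> x \<le> ereal r \<longrightarrow> b < inner u x + s * r"
    using Conv_epigraph_separation[OF assms] by metis
  \<comment> \<open>the hyperplane separates two points on one vertical line, so it is not vertical\<close>
  have "b < inner u x1 + s * r1" using usb(3) x1 by simp
  with usb(2) have "0 < s" by (simp add: right_diff_distrib)
  from nonvertical_separation_affine_minorant(1)[OF Conv_not_MInf[OF assms] this usb(2,3)]
  show thesis by (intro that[of "- u /\<^sub>R s" "b / s"]) simp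
qed

lemma tilted_affine_minorant:
  fixes \<phi> :: "'a::real_inner \<Rightarrow> ereal"
  assumes minor: "\<And>x. ereal (inner x y0 + c0) \<le> \<phi> x"
    and "inner u x0 < b" and vertical: "\<And>x. \<phi> x \<noteq> \<infinity> \<Longrightarrow> b < inner u x"
  obtains y c where "\<And>x. ereal (inner x y + c) \<le> \<phi> x" "a < inner x0 y + c"
proof -
  define \<delta> where "\<delta> = b - inner u x0"
  have "0 < \<delta>" using assms(2) by (simp add: \<delta>_def)
  define L where "L = max 0 ((a - (inner x0 y0 + c0) + 1) / \<delta>)"
  have eq: "inner x (y0 - L *\<^sub>R u) + (c0 + L * b) = inner x y0 + c0 + L * (b - inner u x)" for x
    by (simp add: inner_commute algebra_simps)
  show thesis
  proof (rule that)
    fix x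
    show "ereal (inner x (y0 - L *\<^sub>R u) + (c0 + L * b)) \<le> \<phi> x"
    proof (cases "\<phi> x = \<infinity>")
      case False
      then have "L * (b - inner u x) \<le> 0"
        using vertical[of x] by (simp add: L_def mult_nonneg_nonpos)
      then have "ereal (inner x (y0 - L *\<^sub>R u) + (c0 + L * b)) \<le> ereal (inner x y0 + c0)"
        by (simp add: eq)
      also have "\<dots> \<le> \<phi> x" by (rule minor)
      finally show ?thesis .
    qed simp
  next
    have "(a - (inner x0 y0 + c0) + 1) / \<delta> \<le> L" by (simp add: L_def)
    then have "a - (inner x0 y0 + c0) + 1 \<le> L * \<delta>"
      using \<open>0 < \<delta>\<close> by (simp add: pos_divide_le_eq)
    then show "a < inner x0 (y0 - L *\<^sub>R u) + (c0 + L * b)"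
      by (simp add: eq \<delta>_def)
  qed
qed

lemma Conv_affine_minorant:
  fixes \<phi> :: "'a::euclidean_space \<Rightarrow> ereal"
  assumes "\<phi> \<in> Conv" "ereal a < \<phi> x0"
  obtains y c where "\<And>x. ereal (inner x y + c) \<le> \<phi> x" "a < inner x0 y + c"
proof -
  obtain s u b where usb: "0 \<le> s" "inner u x0 + s * a < b"
    "\<forall>x r. \<phi> x \<le> ereal r \<longrightarrow> b < inner u x + s * r"
    using Conv_epigraph_separation[OF assms] by metis
  show thesis
  proof (cases "s = 0")
    case False
    with usb(1) have "0 < s" by simp
    show thesis
      using nonvertical_separation_affine_minorant[OF Conv_not_MInf[OF assms(1)] \<open>0 < s\<close> usb(2,3)]
      by (intro that[of "- u /\<^sub>R s" "b / s"]) auto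
  next
    case True
    obtain y0 c0 where minor: "\<And>x. ereal (inner x y0 + c0) \<le> \<phi> x"
      using Conv_has_affine_minorant[OF assms(1)] by metis
    have vertical: "b < inner u x" if fin: "\<phi> x \<noteq> \<infinity>" for x
    proof -
      obtain r where "\<phi> x = ereal r"
        using fin Conv_not_MInf[OF assms(1), of x] by (cases "\<phi> x") auto
      then have "b < inner u x + s * r" using usb(3) by simp
      then show ?thesis using True by simp
    qed
    have "inner u x0 < b" using usb(2) True by simp
    from tilted_affine_minorant[OF minor this vertical] show thesis using that by metis
  qed
qed

theorem Conv_biconjugate:
  fixes \<phi> :: "'a::euclidean_space \<Rightarrow> ereal"
  assumes "\<phi> \<in> Conv"
  shows "legendre (legendre \<phi>) = \<phi>"
proof (intro ext antisym)
  fix x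
  show "legendre (legendre \<phi>) x \<le> \<phi> x"
    unfolding legendre_def[of "legendre \<phi>"]
  proof (rule SUP_least)
    fix y
    show "ereal (inner y x) - legendre \<phi> y \<le> \<phi> x"
    proof (cases "\<phi> x")
      case (real r)
      have "ereal (inner y x) - legendre \<phi> y \<le> ereal (inner y x) - (ereal (inner x y) - \<phi> x)"
        by (intro ereal_minus_mono order_refl fenchel_young)
      also have "\<dots> = \<phi> x" using real by (simp add: inner_commute)
      finally show ?thesis .
    qed (use Conv_not_MInf[OF assms] in auto)
  qed
  show "\<phi> x \<le> legendre (legendre \<phi>) x"
  proof (rule ccontr)
    assume "\<not> ?thesis"
    then have "legendre (legendre \<phi>) x < \<phi> x" by simp
    then obtain a where a: "legendre (legendre \<phi>) x < ereal a" "ereal a < \<phi> x"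
      using ereal_dense2 by blast
    obtain y c where yc: "\<And>z. ereal (inner z y + c) \<le> \<phi> z" "a < inner x y + c"
      using Conv_affine_minorant[OF assms a(2)] by metis
    have "legendre \<phi> y \<le> ereal (- c)"
      unfolding legendre_def
    proof (rule SUP_least)
      fix z
      show "ereal (inner z y) - \<phi> z \<le> ereal (- c)"
        using yc(1)[of z] Conv_not_MInf[OF assms, of z] by (cases "\<phi> z") auto
    qed
    then have "ereal (inner y x) - ereal (- c) \<le> ereal (inner y x) - legendre \<phi> y"
      by (intro ereal_minus_mono order_refl)
    also have "\<dots> \<le> legendre (legendre \<phi>) x" by (rule fenchel_young)
    finally have "ereal (inner x y + c) \<le> legendre (legendre \<phi>) x" by (simp add: inner_commute)
    then have "ereal (inner x y + c) < ereal a" using a(1) by (rule le_less_trans)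
    with yc(2) show False by simp
  qed
qed

lemma legendre_cmult:
  fixes \<psi> :: "'a::real_inner \<Rightarrow> ereal"
  assumes "0 < c"
  shows "legendre (\<lambda>y. ereal c * \<psi> y) x = ereal c * legendre \<psi> (x /\<^sub>R c)"
proof -
  have eq: "ereal (inner y x) - ereal c * \<psi> y = (ereal (inner y (x /\<^sub>R c)) - \<psi> y) * ereal c" for y
    using assms by (cases "\<psi> y") (simp_all add: field_simps)
  have "legendre (\<lambda>y. ereal c * \<psi> y) x = (SUP y. ereal (inner y (x /\<^sub>R c)) - \<psi> y) * ereal c"
    unfolding legendre_def eq using assms by (intro Sup_ereal_mult_right'[symmetric]) auto
  then show ?thesis by (simp add: legendre_def mult.commute)
qed

lemma alpha_sum_self:
  fixes \<phi> :: "'a::euclidean_space \<Rightarrow> ereal"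
  assumes "\<phi> \<in> Conv" "0 \<le> t"
  shows "alpha_sum \<alpha> \<phi> t \<phi> x = alpha_fn \<alpha> (\<lambda>z. ereal (1 + t) * \<phi> z) (x /\<^sub>R (1 + t))"
proof -
  have "legendre \<phi> y + ereal t * legendre \<phi> y = ereal (1 + t) * legendre \<phi> y" for y
    using assms(2) by (cases "legendre \<phi> y") (simp_all add: algebra_simps)
  then have "legendre (\<lambda>y. legendre \<phi> y + ereal t * legendre \<phi> y) x
      = ereal (1 + t) * \<phi> (x /\<^sub>R (1 + t))"
    using assms by (simp add: legendre_cmult Conv_biconjugate)
  then show ?thesis by (simp add: alpha_sum_def alpha_fn_def)
qed

section \<open>The functions \<open>s \<mapsto> (1 - \<alpha> s r)\<^bsup>1/\<alpha>\<^esup>\<close>\<close>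

lemma one_minus_neg_mult_pos: "\<alpha> < 0 \<Longrightarrow> 0 \<le> r \<Longrightarrow> 0 < 1 - \<alpha> * (r::real)"
  using mult_nonpos_nonneg[of \<alpha> r] by simp

lemma has_real_derivative_alpha_power:
  fixes \<alpha> r s :: real
  assumes "\<alpha> \<noteq> 0" "0 < 1 - \<alpha> * (s * r)"
  shows "((\<lambda>s. (1 - \<alpha> * (s * r)) powr (1 / \<alpha>)) has_real_derivative
           - r * (1 - \<alpha> * (s * r)) powr (1 / \<alpha> - 1)) (at s)"
  using assms by (auto intro!: derivative_eq_intros)

lemma alpha_power_difference_quotient_bound:
  fixes \<alpha> r s :: real
  assumes "\<alpha> < 0" "0 \<le> r" "1 < s"
  shows "\<bar>((1 - \<alpha> * (s * r)) powr (1 / \<alpha>) - (1 - \<alpha> * r) powr (1 / \<alpha>)) / (s - 1)\<bar>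
           \<le> r * (1 - \<alpha> * r) powr (1 / \<alpha> - 1)"
proof -
  let ?h = "\<lambda>s. (1 - \<alpha> * (s * r)) powr (1 / \<alpha>)"
  have pos: "0 < 1 - \<alpha> * (\<xi> * r)" if "0 \<le> \<xi>" for \<xi>
    using assms that by (intro one_minus_neg_mult_pos) auto
  have "(?h has_real_derivative - r * (1 - \<alpha> * (\<xi> * r)) powr (1 / \<alpha> - 1)) (at \<xi>)"
    if "1 \<le> \<xi>" for \<xi>
    using assms(1) pos that by (intro has_real_derivative_alpha_power) auto
  from MVT2[OF \<open>1 < s\<close> this] obtain \<xi> where
    \<xi>: "1 < \<xi>" "?h s - ?h 1 = (s - 1) * (- r * (1 - \<alpha> * (\<xi> * r)) powr (1 / \<alpha> - 1))"
    by auto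
  have "1 - \<alpha> * r \<le> 1 - \<alpha> * (\<xi> * r)"
    using assms \<xi>(1) by (simp add: mult_left_mono_neg mult_le_cancel_right1)
  then have "(1 - \<alpha> * (\<xi> * r)) powr (1 / \<alpha> - 1) \<le> (1 - \<alpha> * r) powr (1 / \<alpha> - 1)"
    using assms pos[of 1] by (intro powr_mono2') (auto simp: divide_less_0_iff)
  then show ?thesis
    using \<xi> assms by (simp add: abs_mult mult_left_mono)
qed

lemma alpha_power_right_derivative:
  fixes \<alpha> r :: real
  assumes "\<alpha> < 0" "0 \<le> r"
  shows "((\<lambda>s. ((1 - \<alpha> * (s * r)) powr (1 / \<alpha>) - (1 - \<alpha> * r) powr (1 / \<alpha>)) / (s - 1))
           \<longlongrightarrow> - r * (1 - \<alpha> * r) powr (1 / \<alpha> - 1)) (at_right 1)"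
proof -
  have "((\<lambda>s. (1 - \<alpha> * (s * r)) powr (1 / \<alpha>)) has_real_derivative
           - r * (1 - \<alpha> * (1 * r)) powr (1 / \<alpha> - 1)) (at 1)"
    using assms by (intro has_real_derivative_alpha_power one_minus_neg_mult_pos) auto
  then show ?thesis
    unfolding has_field_derivative_iff by (auto intro: tendsto_mono[OF at_le])
qed

lemma alpha_fn_nonneg: "0 \<le> alpha_fn \<alpha> \<phi> x"
  by (simp add: alpha_fn_def split: ereal.split)

lemma alpha_fn_scaled_le:
  assumes "\<alpha> < 0" "0 \<le> \<phi> z" "1 \<le> s"
  shows "alpha_fn \<alpha> (\<lambda>z. ereal s * \<phi> z) z \<le> alpha_fn \<alpha> \<phi> z"
proof (cases "\<phi> z")
  case (real r)
  then have "0 \<le> r" using assms(2) by simp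
  then have "1 - \<alpha> * r \<le> 1 - \<alpha> * (s * r)"
    using assms by (simp add: mult_left_mono_neg mult_le_cancel_right1)
  then show ?thesis
    using real assms \<open>0 \<le> r\<close> one_minus_neg_mult_pos[of \<alpha> r]
    by (simp add: alpha_fn_def powr_mono2')
qed (use assms in \<open>auto simp: alpha_fn_def\<close>)

lemma alpha_weight_ereal:
  assumes "\<alpha> < 0" "0 \<le> r" "\<phi> z = ereal r"
  shows "real_of_ereal (\<phi> z) * alpha_fn \<alpha> \<phi> z powr (1 - \<alpha>) = r * (1 - \<alpha> * r) powr (1 / \<alpha> - 1)"
  using assms one_minus_neg_mult_pos[OF assms(1,2)]
  by (simp add: alpha_fn_def powr_powr field_simps)

lemma alpha_weight_le:
  assumes "\<alpha> < 0" "0 \<le> \<phi> z"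
  shows "real_of_ereal (\<phi> z) * alpha_fn \<alpha> \<phi> z powr (1 - \<alpha>) \<le> - alpha_fn \<alpha> \<phi> z / \<alpha>"
proof (cases "\<phi> z")
  case (real r)
  then have "0 \<le> r" using assms(2) by simp
  define A where "A = 1 - \<alpha> * r"
  have "0 < A" unfolding A_def using assms(1) \<open>0 \<le> r\<close> by (rule one_minus_neg_mult_pos)
  have "r * A powr (1 / \<alpha> - 1) = r / A * A powr (1 / \<alpha>)"
    using \<open>0 < A\<close> by (simp add: powr_diff)
  also have "\<dots> \<le> - 1 / \<alpha> * A powr (1 / \<alpha>)"
    using assms \<open>0 < A\<close> \<open>0 \<le> r\<close> by (intro mult_right_mono) (auto simp: A_def field_simps)
  finally show ?thesis
    unfolding alpha_weight_ereal[of \<alpha> r \<phi> z, OF assms(1) \<open>0 \<le> r\<close> real]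
    using real by (simp add: A_def alpha_fn_def)
qed (use assms in \<open>auto simp: alpha_fn_def\<close>)

lemma alpha_fn_scaled_difference_quotient:
  assumes "\<alpha> < 0" "0 \<le> \<phi> z"
  defines "q \<equiv> \<lambda>s. (alpha_fn \<alpha> (\<lambda>z. ereal s * \<phi> z) z - alpha_fn \<alpha> \<phi> z) / (s - 1)"
    and "w \<equiv> real_of_ereal (\<phi> z) * alpha_fn \<alpha> \<phi> z powr (1 - \<alpha>)"
  shows "(q \<longlongrightarrow> - w) (at_right 1)" and "\<And>s. 1 < s \<Longrightarrow> \<bar>q s\<bar> \<le> w"
proof -
  have "(q \<longlongrightarrow> - w) (at_right 1) \<and> (\<forall>s>1. \<bar>q s\<bar> \<le> w)"
  proof (cases "\<phi> z")
    case (real r)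
    then have "0 \<le> r" using assms(2) by simp
    have "q = (\<lambda>s. ((1 - \<alpha> * (s * r)) powr (1 / \<alpha>) - (1 - \<alpha> * r) powr (1 / \<alpha>)) / (s - 1))"
      using real by (simp add: q_def alpha_fn_def)
    moreover have "w = r * (1 - \<alpha> * r) powr (1 / \<alpha> - 1)"
      unfolding w_def using assms(1) \<open>0 \<le> r\<close> real by (rule alpha_weight_ereal)
    ultimately show ?thesis
      using alpha_power_right_derivative[OF assms(1) \<open>0 \<le> r\<close>]
        alpha_power_difference_quotient_bound[OF assms(1) \<open>0 \<le> r\<close>] by simp
  next
    case PInf
    then have q0: "q s = 0" if "1 < s" for s
      using that by (simp add: q_def alpha_fn_def)
    have w0: "w = 0" using PInf by (simp add: w_def)
    have "\<forall>\<^sub>F s in at_right 1. q s = - w"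
      using eventually_at_right_less[of "1::real"] by eventually_elim (simp add: q0 w0)
    then have "(q \<longlongrightarrow> - w) (at_right 1)" by (rule tendsto_eventually)
    then show ?thesis by (simp add: q0 w0)
  qed (use assms(2) in auto)
  then show "(q \<longlongrightarrow> - w) (at_right 1)" and "\<And>s. 1 < s \<Longrightarrow> \<bar>q s\<bar> \<le> w" by auto
qed

section \<open>Decay of \<open>\<alpha>\<close>-concave functions with coercive base\<close>

lemma coercive_linear_minorant:
  fixes \<phi> :: "'a::real_normed_vector \<Rightarrow> ereal"
  assumes "coercive \<phi>" "\<forall>x. 0 \<le> \<phi> x"
  obtains c d where "0 < c" "0 \<le> d" "\<And>x. ereal (c * norm x - d) \<le> \<phi> x"
proof -
  obtain c where "0 < ereal c" "ereal c < Liminf at_infinity (\<lambda>x. \<phi> x / ereal (norm x))"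
    using assms(1) ereal_dense2 unfolding coercive_def by blast
  then have "0 < c" and "\<forall>\<^sub>F x in at_infinity. ereal c < \<phi> x / ereal (norm x)"
    by (auto dest: less_LiminfD)
  then obtain R where R: "\<And>x. R \<le> norm x \<Longrightarrow> ereal c < \<phi> x / ereal (norm x)"
    by (auto simp: eventually_at_infinity)
  define d where "d = c * max R 1"
  have "ereal (c * norm x - d) \<le> \<phi> x" for x
  proof (cases "max R 1 \<le> norm x")
    case True
    show ?thesis
    proof (cases "\<phi> x")
      case (real r)
      moreover have "x \<noteq> 0" using True by auto
      ultimately have "c < r / norm x" using R[of x] True by simp
      moreover have "0 < norm x" using True by linarith
      ultimately have "c * norm x < r" by (simp add: pos_less_divide_eq)
      moreover have "0 \<le> c * max R 1" using \<open>0 < c\<close> by simp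
      ultimately show ?thesis using real by (simp add: d_def)
    qed (use assms(2) in auto)
  next
    case False
    then have "norm x \<le> max R 1" by linarith
    then have "c * norm x - d \<le> 0" using \<open>0 < c\<close> by (simp add: d_def mult_left_mono)
    then have "ereal (c * norm x - d) \<le> 0" by (simp add: zero_ereal_def)
    also have "0 \<le> \<phi> x" using assms(2) by simp
    finally show ?thesis .
  qed
  moreover have "0 \<le> d" using \<open>0 < c\<close> by (simp add: d_def)
  ultimately show thesis using \<open>0 < c\<close> that by blast
qed

lemma coercive_alpha_base_lower_bound:
  fixes \<phi> :: "'a::real_normed_vector \<Rightarrow> ereal"
  assumes "\<alpha> < 0" "coercive \<phi>" "\<forall>x. 0 \<le> \<phi> x"
  obtains \<kappa> where "0 < \<kappa>" "\<And>z r. \<phi> z = ereal r \<Longrightarrow> \<kappa> * (1 + norm z) \<le> 1 - \<alpha> * r"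
proof -
  obtain c d where cd: "0 < c" "0 \<le> d" "\<And>x. ereal (c * norm x - d) \<le> \<phi> x"
    using coercive_linear_minorant[OF assms(2,3)] by metis
  define u where "u = - \<alpha> * c"
  define D where "D = 1 - \<alpha> * d"
  have "0 < u" using assms(1) cd(1) by (simp add: u_def mult_neg_pos)
  have "1 \<le> D" using assms(1) cd(2) by (simp add: D_def mult_nonpos_nonneg)
  show thesis
  proof (rule that)
    show "0 < u / (u + D)" using \<open>0 < u\<close> \<open>1 \<le> D\<close> by simp
    fix z r
    assume z: "\<phi> z = ereal r"
    define A where "A = 1 - \<alpha> * r"
    have "0 \<le> r" using assms(3)[rule_format, of z] z by simp
    then have "1 \<le> A" using assms(1) by (simp add: A_def mult_nonpos_nonneg)
    have "c * norm z \<le> r + d" using cd(3)[of z] z by simp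
    then have "u * norm z \<le> - \<alpha> * r + - \<alpha> * d"
      using assms(1) mult_left_mono[of "c * norm z" "r + d" "- \<alpha>"] by (simp add: u_def algebra_simps)
    also have "\<dots> \<le> A * D"
    proof -
      have "0 \<le> (- \<alpha> * r) * (- \<alpha> * d)"
        using \<open>0 \<le> r\<close> cd(2) assms(1) by (intro mult_nonneg_nonneg) auto
      then show ?thesis by (simp add: A_def D_def algebra_simps)
    qed
    finally have "u * (1 + norm z) \<le> A * (u + D)"
      using \<open>1 \<le> A\<close> \<open>0 < u\<close> by (simp add: algebra_simps) (smt (verit) mult_le_cancel_right1)
    then show "u / (u + D) * (1 + norm z) \<le> 1 - \<alpha> * r"
      using \<open>0 < u\<close> \<open>1 \<le> D\<close> by (simp add: A_def divide_le_eq mult.commute)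
  qed
qed

lemma alpha_fn_decay:
  fixes \<phi> :: "'a::real_normed_vector \<Rightarrow> ereal"
  assumes "\<alpha> < 0" "coercive \<phi>" "\<forall>x. 0 \<le> \<phi> x"
  obtains K where "\<And>z. alpha_fn \<alpha> \<phi> z \<le> K * (1 + norm z) powr (1 / \<alpha>)"
proof -
  obtain \<kappa> where \<kappa>: "0 < \<kappa>" "\<And>z r. \<phi> z = ereal r \<Longrightarrow> \<kappa> * (1 + norm z) \<le> 1 - \<alpha> * r"
    using coercive_alpha_base_lower_bound[OF assms] by metis
  show thesis
  proof (rule that)
    fix z
    show "alpha_fn \<alpha> \<phi> z \<le> \<kappa> powr (1 / \<alpha>) * (1 + norm z) powr (1 / \<alpha>)"
    proof (cases "\<phi> z")
      case (real r)
      have "0 < \<kappa> * (1 + norm z)" using \<kappa>(1) by (simp add: add_pos_nonneg)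
      then have "(1 - \<alpha> * r) powr (1 / \<alpha>) \<le> (\<kappa> * (1 + norm z)) powr (1 / \<alpha>)"
        using \<kappa>(2)[OF real] assms(1) by (intro powr_mono2') auto
      then show ?thesis using real \<kappa>(1) by (simp add: alpha_fn_def powr_mult)
    qed (use assms(3) in \<open>auto simp: alpha_fn_def\<close>)
  qed
qed

section \<open>Lebesgue integrals on \<open>\<real>\<^sup>n\<close>\<close>

lemma closed_epigraph_borel_measurable:
  fixes \<phi> :: "'a::topological_space \<Rightarrow> ereal"
  assumes "closed (epigraph \<phi>)"
  shows "\<phi> \<in> borel_measurable borel"
proof (rule borel_measurableI_le)
  fix y :: ereal
  have "{x. \<phi> x \<le> y} = (\<Inter>r\<in>{r. y \<le> ereal r}. (\<lambda>x. (x, r)) -` epigraph \<phi>)"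
    by (auto simp: epigraph_def intro: ereal_le_real order_trans)
  moreover have "closed \<dots>"
    by (intro closed_INT ballI closed_vimage assms continuous_intros)
  ultimately show "{x \<in> space borel. \<phi> x \<le> y} \<in> sets borel" by simp
qed

lemma Conv_borel_measurable: "\<phi> \<in> Conv \<Longrightarrow> \<phi> \<in> borel_measurable borel"
  by (simp add: Conv_def closed_epigraph_borel_measurable)

lemma borel_measurable_alpha_fn:
  assumes [measurable]: "\<phi> \<in> borel_measurable M"
  shows "alpha_fn \<alpha> \<phi> \<in> borel_measurable M"
proof -
  have "alpha_fn \<alpha> \<phi> = (\<lambda>x. if \<bar>\<phi> x\<bar> = \<infinity> then 0 else (1 - \<alpha> * real_of_ereal (\<phi> x)) powr (1 / \<alpha>))"
    by (auto simp: alpha_fn_def fun_eq_iff split: ereal.split)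
  then show ?thesis by simp
qed

lemma nn_integral_one_plus_abs_powr_finite:
  fixes e :: real
  assumes "e < -1"
  shows "(\<integral>\<^sup>+x. ennreal ((1 + \<bar>x\<bar>) powr e) \<partial>lborel) < \<infinity>"
proof -
  let ?h = "\<lambda>x::real. ennreal ((1 + x) powr e) * indicator {0..} x"
  have half: "(\<integral>\<^sup>+x. ?h x \<partial>lborel) = ennreal (0 - (1 + 0) powr (e + 1) / (e + 1))"
  proof (rule nn_integral_FTC_atLeast)
    fix x :: real
    assume "0 \<le> x"
    then show "((\<lambda>x. (1 + x) powr (e + 1) / (e + 1)) has_real_derivative (1 + x) powr e) (at x)"
      using assms by (auto intro!: derivative_eq_intros)
  next
    show "((\<lambda>x::real. (1 + x) powr (e + 1) / (e + 1)) \<longlongrightarrow> 0) at_top"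
      using assms by real_asymp
  qed auto
  have "ennreal ((1 + \<bar>x\<bar>) powr e) \<le> ?h x + ?h (0 + -1 * x)" for x :: real
    by (cases "0 \<le> x") (simp_all add: indicator_def)
  then have "(\<integral>\<^sup>+x. ennreal ((1 + \<bar>x\<bar>) powr e) \<partial>lborel)
      \<le> (\<integral>\<^sup>+x. ?h x \<partial>lborel) + (\<integral>\<^sup>+x. ?h (0 + -1 * x) \<partial>lborel)"
    by (subst nn_integral_add[symmetric]) (auto intro!: nn_integral_mono)
  also have "(\<integral>\<^sup>+x. ?h (0 + -1 * x) \<partial>lborel) = (\<integral>\<^sup>+x. ?h x \<partial>lborel)"
    using nn_integral_real_affine[of ?h "-1" 0] by simp
  finally show ?thesis
    using half by (simp add: top.not_eq_extremum order_le_less_trans)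
qed

lemma integrable_one_plus_norm_powr:
  fixes q :: real
  assumes "q < - real DIM('a::euclidean_space)"
  shows "integrable lborel (\<lambda>z::'a. (1 + norm z) powr q)"
proof -
  define e where "e = q / DIM('a)"
  have "e < -1" using assms by (simp add: e_def field_simps)
  let ?P = "\<lambda>z::'a. \<Prod>b\<in>Basis. (1 + \<bar>z \<bullet> b\<bar>) powr e"
  have "(\<integral>\<^sup>+z. ennreal (?P z) \<partial>lborel)
      = (\<integral>\<^sup>+(z::'a). (\<Prod>b\<in>Basis. ennreal ((1 + \<bar>z \<bullet> b\<bar>) powr e)) \<partial>lborel)"
    by (simp add: prod_ennreal)
  also have "\<dots> = (\<Prod>b\<in>(Basis::'a set). \<integral>\<^sup>+x. ennreal ((1 + \<bar>x\<bar>) powr e) \<partial>lborel)"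
    by (rule nn_integral_lborel_prod) auto
  also have "\<dots> < \<infinity>"
    using nn_integral_one_plus_abs_powr_finite[OF \<open>e < -1\<close>] by (simp add: power_less_top_ennreal)
  finally have P_int: "integrable lborel ?P"
    by (intro integrableI_nonneg AE_I2 prod_nonneg) auto
  have bound: "norm ((1 + norm z) powr q) \<le> norm (?P z)" for z
  proof -
    have "(1 + norm z) powr q = ((1 + norm z) powr e) powr real DIM('a)"
      by (simp add: powr_powr e_def)
    also have "\<dots> = (\<Prod>b\<in>(Basis::'a set). (1 + norm z) powr e)"
      by (subst powr_realpow) (auto simp: add_nonneg_eq_0_iff)
    also have "\<dots> \<le> ?P z"
      using \<open>e < -1\<close> by (intro prod_mono) (auto intro!: powr_mono2' Basis_le_norm)
    finally show ?thesis by (simp add: prod_nonneg)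
  qed
  show ?thesis
    by (rule Bochner_Integration.integrable_bound[OF P_int]) (measurable, intro AE_I2 bound)
qed

lemma
  fixes g :: "'a::euclidean_space \<Rightarrow> real"
  assumes "0 < c" and [measurable]: "g \<in> borel_measurable borel"
  shows lborel_integrable_divideR_iff: "integrable lborel (\<lambda>x. g (x /\<^sub>R c)) \<longleftrightarrow> integrable lborel g"
    and lborel_integral_divideR: "(\<integral>x. g (x /\<^sub>R c) \<partial>lborel) = c ^ DIM('a) * integral\<^sup>L lborel g"
proof -
  let ?T = "\<lambda>x::'a. c *\<^sub>R x"
  have lborel: "lborel = density (distr lborel borel ?T) (\<lambda>_. ennreal (c ^ DIM('a)))"
    using lborel_affine[of c 0] \<open>0 < c\<close> by simp
  have [measurable]: "?T \<in> borel_measurable lborel" by measurable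
  have "integrable lborel (\<lambda>x. g (x /\<^sub>R c))
      \<longleftrightarrow> integrable (distr lborel borel ?T) (\<lambda>x. c ^ DIM('a) *\<^sub>R g (x /\<^sub>R c))"
    using \<open>0 < c\<close> by (subst lborel) (simp add: integrable_density)
  also have "\<dots> \<longleftrightarrow> integrable lborel g"
    using \<open>0 < c\<close> by (subst integrable_distr_eq) auto
  finally show "integrable lborel (\<lambda>x. g (x /\<^sub>R c)) \<longleftrightarrow> integrable lborel g" .
  have "(\<integral>x. g (x /\<^sub>R c) \<partial>lborel) = (\<integral>x. c ^ DIM('a) *\<^sub>R g (x /\<^sub>R c) \<partial>distr lborel borel ?T)"
    using \<open>0 < c\<close> by (subst lborel) (simp add: integral_density)
  also have "\<dots> = c ^ DIM('a) * integral\<^sup>L lborel g"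
    using \<open>0 < c\<close> by (subst integral_distr) auto
  finally show "(\<integral>x. g (x /\<^sub>R c) \<partial>lborel) = c ^ DIM('a) * integral\<^sup>L lborel g" .
qed

lemma integral_dominated_convergence_at_right:
  fixes s :: "real \<Rightarrow> 'a \<Rightarrow> 'b::{banach, second_countable_topology}"
  assumes "f \<in> borel_measurable M" "\<And>t. s t \<in> borel_measurable M" "integrable M w"
    and lim: "AE x in M. ((\<lambda>t. s t x) \<longlongrightarrow> f x) (at_right a)"
    and bound: "\<forall>\<^sub>F t in at_right a. AE x in M. norm (s t x) \<le> w x"
  shows "((\<lambda>t. integral\<^sup>L M (s t)) \<longlongrightarrow> integral\<^sup>L M f) (at_right a)"
proof -
  \<comment> \<open>\<open>t = a + 1/u\<close> turns \<open>t \<rightarrow> a\<^sup>+\<close> into \<open>u \<rightarrow> \<infinity>\<close>\<close>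
  have tendsto_iff: "(g \<longlongrightarrow> l) (at_right a) \<longleftrightarrow> ((\<lambda>u. g (inverse u + a)) \<longlongrightarrow> l) at_top"
    for g :: "real \<Rightarrow> 'c::topological_space" and l
    unfolding filterlim_at_right_to_0[of g _ a] filterlim_at_right_to_top ..
  have eventually_iff: "eventually P (at_right a) \<longleftrightarrow> eventually (\<lambda>u. P (inverse u + a)) at_top" for P
    unfolding eventually_at_right_to_0[of P a] eventually_at_right_to_top ..
  have "((\<lambda>u. integral\<^sup>L M (s (inverse u + a))) \<longlongrightarrow> integral\<^sup>L M f) at_top"
  proof (rule integral_dominated_convergence_at_top[OF assms(1) assms(2) assms(3)])
    show "AE x in M. ((\<lambda>u. s (inverse u + a) x) \<longlongrightarrow> f x) at_top"
      using lim by eventually_elim (simp only: tendsto_iff)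
    show "\<forall>\<^sub>F u in at_top. AE x in M. norm (s (inverse u + a) x) \<le> w x"
      using bound by (simp only: eventually_iff)
  qed
  then show ?thesis by (simp only: tendsto_iff)
qed

section \<open>The first variation of \<open>J\<close>\<close>

lemma integrable_alpha_fn:
  fixes \<phi> :: "'a::euclidean_space \<Rightarrow> ereal"
  assumes "\<phi> \<in> borel_measurable borel" "\<forall>x. 0 \<le> \<phi> x" "coercive \<phi>"
    and "\<alpha> < 0" "1 / \<alpha> < - real DIM('a)"
  shows "integrable lborel (alpha_fn \<alpha> \<phi>)"
proof -
  obtain K where K: "\<And>z. alpha_fn \<alpha> \<phi> z \<le> K * (1 + norm z) powr (1 / \<alpha>)"
    using alpha_fn_decay[OF assms(4,3,2)] by metis
  have "integrable lborel (\<lambda>z::'a. K * (1 + norm z) powr (1 / \<alpha>))"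
    using integrable_one_plus_norm_powr[OF assms(5)] by simp
  then show ?thesis
  proof (rule Bochner_Integration.integrable_bound)
    show "alpha_fn \<alpha> \<phi> \<in> borel_measurable lborel"
      using borel_measurable_alpha_fn[OF assms(1)] by simp
    have "norm (alpha_fn \<alpha> \<phi> z) \<le> norm (K * (1 + norm z) powr (1 / \<alpha>))" for z
    proof -
      have "norm (alpha_fn \<alpha> \<phi> z) = alpha_fn \<alpha> \<phi> z" by (simp add: alpha_fn_nonneg)
      also have "\<dots> \<le> K * (1 + norm z) powr (1 / \<alpha>)" by (rule K)
      also have "\<dots> \<le> norm (K * (1 + norm z) powr (1 / \<alpha>))" by simp
      finally show ?thesis .
    qed
    then show "AE z in lborel. norm (alpha_fn \<alpha> \<phi> z) \<le> norm (K * (1 + norm z) powr (1 / \<alpha>))"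
      by simp
  qed
qed

lemma integrable_alpha_fn_scaled:
  fixes \<phi> :: "'a::euclidean_space \<Rightarrow> ereal"
  assumes "\<phi> \<in> borel_measurable borel" "\<forall>x. 0 \<le> \<phi> x" "\<alpha> < 0"
    and "integrable lborel (alpha_fn \<alpha> \<phi>)" "1 \<le> s"
  shows "integrable lborel (alpha_fn \<alpha> (\<lambda>z. ereal s * \<phi> z))"
proof (rule Bochner_Integration.integrable_bound[OF assms(4)])
  show "alpha_fn \<alpha> (\<lambda>z. ereal s * \<phi> z) \<in> borel_measurable lborel"
    using assms(1) by (simp add: borel_measurable_alpha_fn)
  show "AE z in lborel. norm (alpha_fn \<alpha> (\<lambda>z. ereal s * \<phi> z) z) \<le> norm (alpha_fn \<alpha> \<phi> z)"
    using assms(2,3,5) by (intro AE_I2) (simp add: alpha_fn_nonneg alpha_fn_scaled_le)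
qed

lemma integrable_alpha_weight:
  fixes \<phi> :: "'a::euclidean_space \<Rightarrow> ereal"
  assumes "\<phi> \<in> borel_measurable borel" "\<forall>x. 0 \<le> \<phi> x" "\<alpha> < 0"
    and "integrable lborel (alpha_fn \<alpha> \<phi>)"
  shows "integrable lborel (\<lambda>z. real_of_ereal (\<phi> z) * alpha_fn \<alpha> \<phi> z powr (1 - \<alpha>))"
proof (rule Bochner_Integration.integrable_bound)
  show "integrable lborel (\<lambda>z. - alpha_fn \<alpha> \<phi> z / \<alpha>)"
    using assms(4) by simp
  have [measurable]: "alpha_fn \<alpha> \<phi> \<in> borel_measurable borel"
    using assms(1) by (rule borel_measurable_alpha_fn)
  show "(\<lambda>z. real_of_ereal (\<phi> z) * alpha_fn \<alpha> \<phi> z powr (1 - \<alpha>)) \<in> borel_measurable lborel"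
    using assms(1) by measurable
  have "0 \<le> real_of_ereal (\<phi> z) * alpha_fn \<alpha> \<phi> z powr (1 - \<alpha>)" for z
    using assms(2) by (simp add: real_of_ereal_pos)
  then show "AE z in lborel. norm (real_of_ereal (\<phi> z) * alpha_fn \<alpha> \<phi> z powr (1 - \<alpha>))
      \<le> norm (- alpha_fn \<alpha> \<phi> z / \<alpha>)"
    using alpha_weight_le[of \<alpha> \<phi>, OF assms(3) assms(2)[rule_format]]
    by (intro AE_I2) (simp add: abs_of_neg[OF assms(3)] alpha_fn_nonneg)
qed

lemma has_real_derivative_integral_alpha_fn_scaled:
  fixes \<phi> :: "'a::euclidean_space \<Rightarrow> ereal"
  assumes "\<phi> \<in> borel_measurable borel" "\<forall>x. 0 \<le> \<phi> x" "\<alpha> < 0"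
    and "integrable lborel (alpha_fn \<alpha> \<phi>)"
  shows "((\<lambda>s. \<integral>z. alpha_fn \<alpha> (\<lambda>z. ereal s * \<phi> z) z \<partial>lborel) has_real_derivative
           - (\<integral>z. real_of_ereal (\<phi> z) * alpha_fn \<alpha> \<phi> z powr (1 - \<alpha>) \<partial>lborel)) (at 1 within {1<..})"
proof -
  let ?f = "\<lambda>s. alpha_fn \<alpha> (\<lambda>z. ereal s * \<phi> z)"
  let ?w = "\<lambda>z. real_of_ereal (\<phi> z) * alpha_fn \<alpha> \<phi> z powr (1 - \<alpha>)"
  let ?q = "\<lambda>s z. (?f s z - alpha_fn \<alpha> \<phi> z) / (s - 1)"
  note quotient = alpha_fn_scaled_difference_quotient[of \<alpha> \<phi>, OF assms(3) assms(2)[rule_format]]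
  have [measurable]: "\<phi> \<in> borel_measurable borel" "alpha_fn \<alpha> \<phi> \<in> borel_measurable borel"
      "?f s \<in> borel_measurable borel" for s
    using assms(1) by (auto intro: borel_measurable_alpha_fn)
  have q_integral: "\<forall>\<^sub>F s in at_right 1. (\<integral>z. ?q s z \<partial>lborel)
      = ((\<integral>z. ?f s z \<partial>lborel) - (\<integral>z. alpha_fn \<alpha> \<phi> z \<partial>lborel)) / (s - 1)"
    using eventually_at_right_less[of 1]
  proof eventually_elim
    case (elim s)
    then show ?case
      using integrable_alpha_fn_scaled[OF assms, of s] assms(4) by simp
  qed
  have "((\<lambda>s. \<integral>z. ?q s z \<partial>lborel) \<longlongrightarrow> \<integral>z. - ?w z \<partial>lborel) (at_right 1)"
  proof (rule integral_dominated_convergence_at_right)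
    show "(\<lambda>z. - ?w z) \<in> borel_measurable lborel" "?q s \<in> borel_measurable lborel" for s
      by measurable
    show "integrable lborel ?w" using integrable_alpha_weight[OF assms] .
    show "\<forall>\<^sub>F s in at_right 1. AE z in lborel. norm (?q s z) \<le> ?w z"
      using eventually_at_right_less[of 1]
      by eventually_elim (intro AE_I2, unfold real_norm_def, erule quotient(2))
  qed (intro AE_I2 quotient(1))
  then show ?thesis
    unfolding has_field_derivative_iff using tendsto_cong[OF q_integral] by simp
qed

lemma
  fixes \<phi> :: "'a::euclidean_space \<Rightarrow> ereal"
  assumes "\<phi> \<in> Conv" "0 \<le> t"
  shows integrable_alpha_sum_self_iff: "integrable lborel (alpha_sum \<alpha> \<phi> t \<phi>)
      \<longleftrightarrow> integrable lborel (alpha_fn \<alpha> (\<lambda>z. ereal (1 + t) * \<phi> z))"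
    and J_alpha_sum_self: "J (alpha_sum \<alpha> \<phi> t \<phi>)
      = (1 + t) ^ DIM('a) * (\<integral>z. alpha_fn \<alpha> (\<lambda>z. ereal (1 + t) * \<phi> z) z \<partial>lborel)"
proof -
  have eq: "alpha_sum \<alpha> \<phi> t \<phi> = (\<lambda>x. alpha_fn \<alpha> (\<lambda>z. ereal (1 + t) * \<phi> z) (x /\<^sub>R (1 + t)))"
    using alpha_sum_self[OF assms] by (simp add: fun_eq_iff)
  have "alpha_fn \<alpha> (\<lambda>z. ereal (1 + t) * \<phi> z) \<in> borel_measurable borel"
    using Conv_borel_measurable[OF assms(1)] by (auto intro: borel_measurable_alpha_fn)
  then show "integrable lborel (alpha_sum \<alpha> \<phi> t \<phi>)
      \<longleftrightarrow> integrable lborel (alpha_fn \<alpha> (\<lambda>z. ereal (1 + t) * \<phi> z))"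
    and "J (alpha_sum \<alpha> \<phi> t \<phi>)
      = (1 + t) ^ DIM('a) * (\<integral>z. alpha_fn \<alpha> (\<lambda>z. ereal (1 + t) * \<phi> z) z \<partial>lborel)"
    using assms(2) by (simp_all add: eq J_def lborel_integrable_divideR_iff lborel_integral_divideR)
qed

lemma alpha_sum_self_difference_quotient_tendsto:
  fixes \<phi> :: "'a::euclidean_space \<Rightarrow> ereal"
  assumes "\<phi> \<in> Conv" "\<forall>x. 0 \<le> \<phi> x" "\<alpha> < 0" "integrable lborel (alpha_fn \<alpha> \<phi>)"
  shows "((\<lambda>t. (J (alpha_sum \<alpha> \<phi> t \<phi>) - J (alpha_fn \<alpha> \<phi>)) / t) \<longlongrightarrow>
           real DIM('a) * J (alpha_fn \<alpha> \<phi>)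
             - (\<integral>x. real_of_ereal (\<phi> x) * alpha_fn \<alpha> \<phi> x powr (1 - \<alpha>) \<partial>lborel)) (at_right 0)"
    (is "(_ \<longlongrightarrow> ?D) _")
proof -
  let ?F = "\<lambda>s. s ^ DIM('a) * (\<integral>z. alpha_fn \<alpha> (\<lambda>z. ereal s * \<phi> z) z \<partial>lborel)"
  have "(?F has_real_derivative ?D) (at 1 within {1<..})"
    using DERIV_mult[OF DERIV_pow has_real_derivative_integral_alpha_fn_scaled[OF
          Conv_borel_measurable[OF assms(1)] assms(2-4)]]
    by (simp add: J_def)
  then have lim: "((\<lambda>t. (?F (1 + t) - ?F 1) / t) \<longlongrightarrow> ?D) (at_right 0)"
    unfolding has_field_derivative_iff filterlim_at_right_to_0[of _ _ 1] by (simp add: add.commute)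
  have "\<forall>\<^sub>F t in at_right 0. (?F (1 + t) - ?F 1) / t = (J (alpha_sum \<alpha> \<phi> t \<phi>) - J (alpha_fn \<alpha> \<phi>)) / t"
    using eventually_at_right_less[of 0]
    by eventually_elim (simp add: J_alpha_sum_self[OF assms(1)] J_def[of "alpha_fn \<alpha> \<phi>"])
  then show ?thesis
    using lim by (rule tendsto_cong[THEN iffD1])
qed

lemma eventually_integrable_alpha_sum_self:
  fixes \<phi> :: "'a::euclidean_space \<Rightarrow> ereal"
  assumes "\<phi> \<in> Conv" "\<forall>x. 0 \<le> \<phi> x" "\<alpha> < 0" "integrable lborel (alpha_fn \<alpha> \<phi>)"
  shows "\<forall>\<^sub>F t in at_right 0. integrable lborel (alpha_sum \<alpha> \<phi> t \<phi>)"
  using eventually_at_right_less[of 0]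
  by eventually_elim
    (use integrable_alpha_fn_scaled[OF Conv_borel_measurable[OF assms(1)] assms(2-4)] in
      \<open>simp add: integrable_alpha_sum_self_iff[OF assms(1)]\<close>)

theorem proposition3p2:
  fixes \<phi> :: "real ^ 'n \<Rightarrow> ereal" and \<alpha> :: real
  assumes "- 1 / real CARD('n) < \<alpha>" and "\<alpha> < 0"
    and "\<phi> \<in> Conv" and "\<forall>x. \<phi> x \<ge> 0" and "coercive \<phi>"
  defines "f \<equiv> alpha_fn \<alpha> \<phi>"
  shows "integrable lborel f
    \<and> integrable lborel (\<lambda>x. real_of_ereal (\<phi> x) * f x powr (1 - \<alpha>))
    \<and> eventually (\<lambda>t. integrable lborel (alpha_sum \<alpha> \<phi> t \<phi>)) (at_right 0)
    \<and> ((\<lambda>t. (J (alpha_sum \<alpha> \<phi> t \<phi>) - J f) / t) \<longlongrightarrow>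
           real CARD('n) * J f - integral\<^sup>L lborel (\<lambda>x. real_of_ereal (\<phi> x) * f x powr (1 - \<alpha>)))
         (at_right 0)"
proof -
  have meas: "\<phi> \<in> borel_measurable borel" using assms(3) by (rule Conv_borel_measurable)
  have "1 / \<alpha> < - real DIM(real ^ 'n)"
    using assms(1,2) by (simp add: field_simps)
  then have "integrable lborel f"
    unfolding f_def using meas assms(2,4,5) by (intro integrable_alpha_fn)
  then show ?thesis
    unfolding f_def
    using integrable_alpha_weight[OF meas assms(4,2)]
      eventually_integrable_alpha_sum_self[OF assms(3,4,2)]
      alpha_sum_self_difference_quotient_tendsto[OF assms(3,4,2)]
    by simp
qed

end
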